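(* Let $\mathcal{U}=\begin{pmatrix}\mathcal{A}&\mathcal{M}\\ \mathcal{N}&\mathcal{B}\end{pmatrix}$ be a generalized matrix ring in which $\mathcal{A}$ and $\mathcal{B}$ are 2-torsion free, and let $\phi:\mathcal{U}\to\mathcal{U}$ be an additive mapping such that $\phi(U)\circ V+U\circ\phi(V)=0$ whenever $U,V\in\mathcal{U}$ satisfy $UV=VU=0$. Then $\phi(I)$ lies in the center $Z(\mathcal{U})$ of $\mathcal{U}$. In particular $P\phi(I)=\phi(I)P$ for every idempotent $P\in\mathcal{U}$.
   Context: A generalized matrix ring is built from: unital rings $\mathcal{A},\mathcal{B}$; a unital $(\mathcal{A},\mathcal{B})$-bimodule $\mathcal{M}$ which is faithful on both sides (if $A\mathcal{M}=\{0\}$ then $A=0$; if $\mathcal{M}B=\{0\}$ then $B=0$); a unital $(\mathcal{B},\mathcal{A})$-bimodule $\mathcal{N}$; and bimodule homomorphisms $\mathcal{M}\otimes_{\mathcal{B}}\mathcal{N}\to\mathcal{A}$, $\mathcal{N}\otimes_{\mathcal{A}}\mathcal{M}\to\mathcal{B}$, written $MN$, $NM$, with $(MN)M'=M(NM')$, $(NM)N'=N(MN')$. $\mathcal{U}$ is the ring of matrices $\begin{pmatrix}A&M\\N&B\end{pmatrix}$ under the usual matrix operations, with identity $I$. 2-torsion free: $2X=0\Rightarrow X=0$. $X\circ Y=XY+YX$. The center is $Z(\mathcal{U})=\{\mathrm{diag}(A,B): AM=MB,\ NA=BN \text{ for all } M\in\mathcal{M},N\in\mathcal{N}\}$. *)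

theory Defs
  imports Main "HOL-Library.Product_Plus"
begin

text \<open>A generalized matrix ring (Morita context) U = [A M; N B].  Elements of U are quadruples
  (A, M, N, B) standing for the matrix with rows (A M) and (N B).\<close>

record ('a, 'b, 'm, 'n) gmr =
  actAM :: "'a \<Rightarrow> 'm \<Rightarrow> 'm"
  actMB :: "'m \<Rightarrow> 'b \<Rightarrow> 'm"
  actBN :: "'b \<Rightarrow> 'n \<Rightarrow> 'n"
  actNA :: "'n \<Rightarrow> 'a \<Rightarrow> 'n"
  pairMN :: "'m \<Rightarrow> 'n \<Rightarrow> 'a"
  pairNM :: "'n \<Rightarrow> 'm \<Rightarrow> 'b"

locale generalized_matrix_ring =
  fixes R :: "('a::ring_1, 'b::ring_1, 'm::ab_group_add, 'n::ab_group_add) gmr"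
  assumes
    AM_add1: "\<And>a a' x. actAM R (a + a') x = actAM R a x + actAM R a' x"
and AM_add2: "\<And>a x x'. actAM R a (x + x') = actAM R a x + actAM R a x'"
and AM_assoc: "\<And>a a' x. actAM R (a * a') x = actAM R a (actAM R a' x)"
and AM_one: "\<And>x. actAM R 1 x = x"
and MB_add1: "\<And>x x' b. actMB R (x + x') b = actMB R x b + actMB R x' b"
and MB_add2: "\<And>x b b'. actMB R x (b + b') = actMB R x b + actMB R x b'"
and MB_assoc: "\<And>x b b'. actMB R x (b * b') = actMB R (actMB R x b) b'"
and MB_one: "\<And>x. actMB R x 1 = x"
and AMB_assoc: "\<And>a x b. actMB R (actAM R a x) b = actAM R a (actMB R x b)"
and BN_add1: "\<And>b b' y. actBN R (b + b') y = actBN R b y + actBN R b' y"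
and BN_add2: "\<And>b y y'. actBN R b (y + y') = actBN R b y + actBN R b y'"
and BN_assoc: "\<And>b b' y. actBN R (b * b') y = actBN R b (actBN R b' y)"
and BN_one: "\<And>y. actBN R 1 y = y"
and NA_add1: "\<And>y y' a. actNA R (y + y') a = actNA R y a + actNA R y' a"
and NA_add2: "\<And>y a a'. actNA R y (a + a') = actNA R y a + actNA R y a'"
and NA_assoc: "\<And>y a a'. actNA R y (a * a') = actNA R (actNA R y a) a'"
and NA_one: "\<And>y. actNA R y 1 = y"
and BNA_assoc: "\<And>b y a. actNA R (actBN R b y) a = actBN R b (actNA R y a)"
and MN_add1: "\<And>x x' y. pairMN R (x + x') y = pairMN R x y + pairMN R x' y"
and MN_add2: "\<And>x y y'. pairMN R x (y + y') = pairMN R x y + pairMN R x y'"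
and MN_bal: "\<And>x b y. pairMN R (actMB R x b) y = pairMN R x (actBN R b y)"
and MN_left: "\<And>a x y. pairMN R (actAM R a x) y = a * pairMN R x y"
and MN_right: "\<And>x y a. pairMN R x (actNA R y a) = pairMN R x y * a"
and NM_add1: "\<And>y y' x. pairNM R (y + y') x = pairNM R y x + pairNM R y' x"
and NM_add2: "\<And>y x x'. pairNM R y (x + x') = pairNM R y x + pairNM R y x'"
and NM_bal: "\<And>y a x. pairNM R (actNA R y a) x = pairNM R y (actAM R a x)"
and NM_left: "\<And>b y x. pairNM R (actBN R b y) x = b * pairNM R y x"
and NM_right: "\<And>y x b. pairNM R y (actMB R x b) = pairNM R y x * b"
and MNM_assoc: "\<And>x y x'. actAM R (pairMN R x y) x' = actMB R x (pairNM R y x')"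
and NMN_assoc: "\<And>y x y'. actBN R (pairNM R y x) y' = actNA R y (pairMN R x y')"
and faithful_left: "\<And>a. (\<forall>x. actAM R a x = 0) \<Longrightarrow> a = 0"
and faithful_right: "\<And>b. (\<forall>x. actMB R x b = 0) \<Longrightarrow> b = 0"

type_synonym ('a, 'b, 'm, 'n) gmat = "'a \<times> 'm \<times> 'n \<times> 'b"

fun gm_mult :: "('a::ring_1, 'b::ring_1, 'm::ab_group_add, 'n::ab_group_add) gmr \<Rightarrow>
    ('a, 'b, 'm, 'n) gmat \<Rightarrow> ('a, 'b, 'm, 'n) gmat \<Rightarrow> ('a, 'b, 'm, 'n) gmat" where
  "gm_mult R (a, x, y, b) (a', x', y', b') =
     (a * a' + pairMN R x y',
      actAM R a x' + actMB R x b',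
      actNA R y a' + actBN R b y',
      pairNM R y x' + b * b')"

definition gm_one :: "('a::ring_1, 'b::ring_1, 'm::ab_group_add, 'n::ab_group_add) gmat" where
  "gm_one = (1, 0, 0, 1)"

definition gm_jordan :: "('a::ring_1, 'b::ring_1, 'm::ab_group_add, 'n::ab_group_add) gmr \<Rightarrow>
    ('a, 'b, 'm, 'n) gmat \<Rightarrow> ('a, 'b, 'm, 'n) gmat \<Rightarrow> ('a, 'b, 'm, 'n) gmat" where
  "gm_jordan R X Y = gm_mult R X Y + gm_mult R Y X"

definition gm_center :: "('a::ring_1, 'b::ring_1, 'm::ab_group_add, 'n::ab_group_add) gmr \<Rightarrow>
    ('a, 'b, 'm, 'n) gmat set" where
  "gm_center R = {X. \<forall>Y. gm_mult R X Y = gm_mult R Y X}"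

definition two_torsion_free :: "'r::ab_group_add itself \<Rightarrow> bool" where
  "two_torsion_free _ \<longleftrightarrow> (\<forall>x::'r. x + x = 0 \<longrightarrow> x = 0)"

end

theory Submission
  imports Defs
begin

text \<open>Write \<open>e\<^sub>1 = diag(1,0)\<close>, \<open>e\<^sub>2 = diag(0,1)\<close> and \<open>D(U,V) = \<phi>(U)\<circ>V + U\<circ>\<phi>(V)\<close>.
  \<open>D\<close> is biadditive and vanishes on two-sided zero products. From \<open>D(e\<^sub>1,e\<^sub>2) = 0\<close> and
  2-torsion freeness, \<open>\<phi>(I) = \<phi>(e\<^sub>1) + \<phi>(e\<^sub>2)\<close> is a diagonal matrix \<open>diag(a,b)\<close>. For an
  off-diagonal \<open>X\<close> in the \<open>\<M>\<close>- or \<open>\<N>\<close>-corner, \<open>e\<^sub>1 + X\<close> and \<open>e\<^sub>2 - X\<close> annihilate each other,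
  so expanding \<open>D(e\<^sub>1 + X, e\<^sub>2 - X) = 0\<close> gives \<open>D(X,e\<^sub>2) = D(e\<^sub>1,X)\<close>, whose off-diagonal
  entry says \<open>aM = Mb\<close> and \<open>Na = bN\<close>. Faithfulness of \<open>\<M>\<close> then makes \<open>a\<close> and \<open>b\<close> central,
  so \<open>diag(a,b)\<close> is central.\<close>

context generalized_matrix_ring
begin

lemma gmr_zero_simps[simp]:
  "actAM R a 0 = 0" "actAM R 0 x = 0" "actMB R x 0 = 0" "actMB R 0 b = 0"
  "actBN R b 0 = 0" "actBN R 0 y = 0" "actNA R y 0 = 0" "actNA R 0 a = 0"
  "pairMN R x 0 = 0" "pairMN R 0 y = 0" "pairNM R y 0 = 0" "pairNM R 0 x = 0"
  using AM_add1[of 0 0 x] AM_add2[of a 0 0] MB_add1[of 0 0 b] MB_add2[of x 0 0]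
    BN_add1[of 0 0 y] BN_add2[of b 0 0] NA_add1[of 0 0 a] NA_add2[of y 0 0]
    MN_add1[of 0 0 y] MN_add2[of x 0 0] NM_add1[of 0 0 x] NM_add2[of y 0 0]
  by auto

lemma gmr_minus_simps[simp]:
  "actAM R (-a) x = - actAM R a x" "actAM R a (-x) = - actAM R a x"
  "actMB R (-x) b = - actMB R x b" "actMB R x (-b) = - actMB R x b"
  "actBN R (-b) y = - actBN R b y" "actBN R b (-y) = - actBN R b y"
  "actNA R (-y) a = - actNA R y a" "actNA R y (-a) = - actNA R y a"
  "pairMN R (-x) y = - pairMN R x y" "pairMN R x (-y) = - pairMN R x y"
  "pairNM R (-y) x = - pairNM R y x" "pairNM R y (-x) = - pairNM R y x"
  using AM_add1[of a "-a" x] AM_add2[of a x "-x"] MB_add1[of x "-x" b] MB_add2[of x b "-b"]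
    BN_add1[of b "-b" y] BN_add2[of b y "-y"] NA_add1[of y "-y" a] NA_add2[of y a "-a"]
    MN_add1[of x "-x" y] MN_add2[of x y "-y"] NM_add1[of y "-y" x] NM_add2[of y x "-x"]
  by (simp_all add: add_eq_0_iff)

lemma gmr_diff_simps[simp]:
  "actAM R (a - a') x = actAM R a x - actAM R a' x" "actAM R a (x - x') = actAM R a x - actAM R a x'"
  "actMB R (x - x') b = actMB R x b - actMB R x' b" "actMB R x (b - b') = actMB R x b - actMB R x b'"
  "actBN R (b - b') y = actBN R b y - actBN R b' y" "actBN R b (y - y') = actBN R b y - actBN R b y'"
  "actNA R (y - y') a = actNA R y a - actNA R y' a" "actNA R y (a - a') = actNA R y a - actNA R y a'"
  "pairMN R (x - x') y = pairMN R x y - pairMN R x' y" "pairMN R x (y - y') = pairMN R x y - pairMN R x y'"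
  "pairNM R (y - y') x = pairNM R y x - pairNM R y' x" "pairNM R y (x - x') = pairNM R y x - pairNM R y x'"
  by (simp_all add: diff_conv_add_uminus AM_add1 AM_add2 MB_add1 MB_add2 BN_add1 BN_add2
      NA_add1 NA_add2 MN_add1 MN_add2 NM_add1 NM_add2 del: add_uminus_conv_diff)

lemmas gmr_add_simps[simp] =
  AM_add1 AM_add2 MB_add1 MB_add2 BN_add1 BN_add2 NA_add1 NA_add2
  MN_add1 MN_add2 NM_add1 NM_add2

lemmas gmr_one_simps[simp] = AM_one MB_one BN_one NA_one

lemma gm_mult_add_left: "gm_mult R (X + Y) Z = gm_mult R X Z + gm_mult R Y Z"
  by (cases X, cases Y, cases Z) (simp add: distrib_right algebra_simps)

lemma gm_mult_add_right: "gm_mult R X (Y + Z) = gm_mult R X Y + gm_mult R X Z"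
  by (cases X, cases Y, cases Z) (simp add: distrib_left algebra_simps)

lemma gm_mult_diff_left: "gm_mult R (X - Y) Z = gm_mult R X Z - gm_mult R Y Z"
  by (cases X, cases Y, cases Z) (simp add: left_diff_distrib algebra_simps)

lemma gm_mult_diff_right: "gm_mult R X (Y - Z) = gm_mult R X Y - gm_mult R X Z"
  by (cases X, cases Y, cases Z) (simp add: right_diff_distrib algebra_simps)

lemma gm_jordan_add_left: "gm_jordan R (X + Y) Z = gm_jordan R X Z + gm_jordan R Y Z"
  by (simp add: gm_jordan_def gm_mult_add_left gm_mult_add_right algebra_simps)

lemma gm_jordan_add_right: "gm_jordan R X (Y + Z) = gm_jordan R X Y + gm_jordan R X Z"
  by (simp add: gm_jordan_def gm_mult_add_left gm_mult_add_right algebra_simps)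

lemma gm_jordan_diff_left: "gm_jordan R (X - Y) Z = gm_jordan R X Z - gm_jordan R Y Z"
  by (simp add: gm_jordan_def gm_mult_diff_left gm_mult_diff_right algebra_simps)

lemma gm_jordan_diff_right: "gm_jordan R X (Y - Z) = gm_jordan R X Y - gm_jordan R X Z"
  by (simp add: gm_jordan_def gm_mult_diff_left gm_mult_diff_right algebra_simps)

lemma diag_in_gm_center:
  assumes M: "\<And>x. actAM R a x = actMB R x b"
    and N: "\<And>y. actNA R y a = actBN R b y"
  shows "(a, 0, 0, b) \<in> gm_center R"
proof -
  have a_central: "a * a' = a' * a" for a'
  proof -
    have "actAM R (a * a' - a' * a) x = 0" for x
      by (simp add: left_diff_distrib AM_assoc M AMB_assoc)
    then show ?thesis using faithful_left[of "a * a' - a' * a"] by simp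
  qed
  have b_central: "b * b' = b' * b" for b'
  proof -
    have "actMB R x (b * b' - b' * b) = 0" for x
      by (simp add: MB_assoc M[symmetric] AMB_assoc)
    then show ?thesis using faithful_right[of "b * b' - b' * b"] by simp
  qed
  have "gm_mult R (a, 0, 0, b) Y = gm_mult R Y (a, 0, 0, b)" for Y
    by (cases Y) (simp add: a_central b_central M N)
  then show ?thesis unfolding gm_center_def by blast
qed

end

locale jordan_zero_product_map = generalized_matrix_ring R
  for R :: "('a::ring_1, 'b::ring_1, 'm::ab_group_add, 'n::ab_group_add) gmr" +
  fixes \<phi> :: "('a, 'b, 'm, 'n) gmat \<Rightarrow> ('a, 'b, 'm, 'n) gmat"
  assumes phi_add: "\<And>U V. \<phi> (U + V) = \<phi> U + \<phi> V"
    and phi_zero_product: "\<And>U V. gm_mult R U V = 0 \<Longrightarrow> gm_mult R V U = 0 \<Longrightarrow>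
            gm_jordan R (\<phi> U) V + gm_jordan R U (\<phi> V) = 0"
begin

definition jordan_defect :: "('a, 'b, 'm, 'n) gmat \<Rightarrow> ('a, 'b, 'm, 'n) gmat \<Rightarrow> ('a, 'b, 'm, 'n) gmat"
  where "jordan_defect U V = gm_jordan R (\<phi> U) V + gm_jordan R U (\<phi> V)"

lemma phi_diff: "\<phi> (U - V) = \<phi> U - \<phi> V"
  using phi_add[of "U - V" V] by (simp add: algebra_simps)

lemma jordan_defect_zero_product:
  "gm_mult R U V = 0 \<Longrightarrow> gm_mult R V U = 0 \<Longrightarrow> jordan_defect U V = 0"
  unfolding jordan_defect_def by (rule phi_zero_product)

lemma jordan_defect_add_left: "jordan_defect (U + U') V = jordan_defect U V + jordan_defect U' V"
  by (simp add: jordan_defect_def phi_add gm_jordan_add_left gm_jordan_add_right algebra_simps)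

lemma jordan_defect_add_right: "jordan_defect U (V + V') = jordan_defect U V + jordan_defect U V'"
  by (simp add: jordan_defect_def phi_add gm_jordan_add_left gm_jordan_add_right algebra_simps)

lemma jordan_defect_diff_right: "jordan_defect U (V - V') = jordan_defect U V - jordan_defect U V'"
  by (simp add: jordan_defect_def phi_diff gm_jordan_diff_left gm_jordan_diff_right algebra_simps)

lemma jordan_defect_idempotents: "jordan_defect (1, 0, 0, 0) (0, 0, 0, 1) = 0"
  by (rule jordan_defect_zero_product) (simp_all add: zero_prod_def)

text \<open>The hypotheses say that \<open>e\<^sub>1 + X\<close> and \<open>e\<^sub>2 - X\<close> annihilate each other on both sides.\<close>

lemma jordan_defect_corner:
  assumes "gm_mult R X X = 0"
    and "gm_mult R (1, 0, 0, 0) X = gm_mult R X (0, 0, 0, 1)"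
    and "gm_mult R (0, 0, 0, 1) X = gm_mult R X (1, 0, 0, 0)"
  shows "jordan_defect X (0, 0, 0, 1) = jordan_defect (1, 0, 0, 0) X"
proof -
  let ?e1 = "(1, 0, 0, 0) :: ('a, 'b, 'm, 'n) gmat" and ?e2 = "(0, 0, 0, 1) :: ('a, 'b, 'm, 'n) gmat"
  have "gm_mult R (?e1 + X) (?e2 - X) = 0" "gm_mult R (?e2 - X) (?e1 + X) = 0"
    using assms by (simp_all add: gm_mult_add_left gm_mult_add_right gm_mult_diff_left
        gm_mult_diff_right zero_prod_def)
  then have "jordan_defect (?e1 + X) (?e2 - X) = 0"
    by (rule jordan_defect_zero_product)
  moreover have "jordan_defect X X = 0"
    using assms(1) by (intro jordan_defect_zero_product)
  ultimately show ?thesis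
    by (simp add: jordan_defect_add_left jordan_defect_add_right jordan_defect_diff_right
        jordan_defect_idempotents algebra_simps)
qed

context
  fixes a1 x1 y1 b1 a2 x2 y2 b2
  assumes phi_e1: "\<phi> (1, 0, 0, 0) = (a1, x1, y1, b1)"
    and phi_e2: "\<phi> (0, 0, 0, 1) = (a2, x2, y2, b2)"
begin

lemma phi_idempotents_entries:
  assumes "two_torsion_free TYPE('a)" and "two_torsion_free TYPE('b)"
  shows "a2 = 0" "b1 = 0" "x1 + x2 = 0" "y1 + y2 = 0"
proof -
  have "a2 + a2 = 0" "b1 + b1 = 0" "x1 + x2 = 0" "y1 + y2 = 0"
    using jordan_defect_idempotents
    by (simp_all add: jordan_defect_def gm_jordan_def phi_e1 phi_e2 zero_prod_def)
  with assms show "a2 = 0" "b1 = 0" "x1 + x2 = 0" "y1 + y2 = 0"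
    unfolding two_torsion_free_def by blast+
qed

lemma phi_idempotents_intertwine_M:
  assumes "a2 = 0" "b1 = 0"
  shows "actAM R a1 x = actMB R x b2"
proof -
  obtain p q r s where phi_X: "\<phi> (0, x, 0, 0) = (p, q, r, s)" by (cases "\<phi> (0, x, 0, 0)")
  have "jordan_defect (0, x, 0, 0) (0, 0, 0, 1) = jordan_defect (1, 0, 0, 0) (0, x, 0, 0)"
    by (rule jordan_defect_corner) (simp_all add: zero_prod_def)
  then have "q + actMB R x b2 = actAM R a1 x + q"
    by (simp add: jordan_defect_def gm_jordan_def phi_e1 phi_e2 phi_X assms)
  then show ?thesis by simp
qed

lemma phi_idempotents_intertwine_N:
  assumes "a2 = 0" "b1 = 0"
  shows "actNA R y a1 = actBN R b2 y"
proof -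
  obtain p q r s where phi_Y: "\<phi> (0, 0, y, 0) = (p, q, r, s)" by (cases "\<phi> (0, 0, y, 0)")
  have "jordan_defect (0, 0, y, 0) (0, 0, 0, 1) = jordan_defect (1, 0, 0, 0) (0, 0, y, 0)"
    by (rule jordan_defect_corner) (simp_all add: zero_prod_def)
  then have "r + actBN R b2 y = actNA R y a1 + r"
    by (simp add: jordan_defect_def gm_jordan_def phi_e1 phi_e2 phi_Y assms)
  then show ?thesis by simp
qed

end

lemma phi_one_in_gm_center:
  assumes "two_torsion_free TYPE('a)" and "two_torsion_free TYPE('b)"
  shows "\<phi> gm_one \<in> gm_center R"
proof -
  obtain a1 x1 y1 b1 where phi_e1: "\<phi> (1, 0, 0, 0) = (a1, x1, y1, b1)"
    by (cases "\<phi> (1, 0, 0, 0)")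
  obtain a2 x2 y2 b2 where phi_e2: "\<phi> (0, 0, 0, 1) = (a2, x2, y2, b2)"
    by (cases "\<phi> (0, 0, 0, 1)")
  note entries = phi_idempotents_entries[OF phi_e1 phi_e2 assms]
  have "\<phi> gm_one = \<phi> (1, 0, 0, 0) + \<phi> (0, 0, 0, 1)"
    by (simp add: gm_one_def flip: phi_add)
  also have "\<dots> = (a1, 0, 0, b2)"
    using entries by (simp add: phi_e1 phi_e2)
  also have "\<dots> \<in> gm_center R"
    using phi_idempotents_intertwine_M[OF phi_e1 phi_e2 entries(1,2)]
      phi_idempotents_intertwine_N[OF phi_e1 phi_e2 entries(1,2)]
    by (rule diag_in_gm_center)
  finally show ?thesis .
qed

end

theorem lemma2p2:
  fixes R :: "('a::ring_1, 'b::ring_1, 'm::ab_group_add, 'n::ab_group_add) gmr"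
    and \<phi> :: "('a, 'b, 'm, 'n) gmat \<Rightarrow> ('a, 'b, 'm, 'n) gmat"
  assumes "generalized_matrix_ring R"
    and "two_torsion_free TYPE('a)"
    and "two_torsion_free TYPE('b)"
    and "\<And>U V. \<phi> (U + V) = \<phi> U + \<phi> V"
    and "\<And>U V. gm_mult R U V = 0 \<Longrightarrow> gm_mult R V U = 0 \<Longrightarrow>
            gm_jordan R (\<phi> U) V + gm_jordan R U (\<phi> V) = 0"
  shows "\<phi> gm_one \<in> gm_center R
    \<and> (\<forall>P. gm_mult R P P = P \<longrightarrow> gm_mult R P (\<phi> gm_one) = gm_mult R (\<phi> gm_one) P)"
proof -
  interpret jordan_zero_product_map R \<phi>
    using assms(1,4,5) by (simp add: jordan_zero_product_map_def jordan_zero_product_map_axioms_def)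
  have "\<phi> gm_one \<in> gm_center R"
    using assms(2,3) by (rule phi_one_in_gm_center)
  then show ?thesis
    unfolding gm_center_def by simp
qed

end
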